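(* Let there be $H$ layers; at each layer $h\in\{1,\dots,H\}$ observed data $x_1^{(h)},\dots,x_N^{(h)}$ are modeled by a $K$-component mixture $p(x_n^{(h)}\mid\mathbf{p}_n^{(h)};\mathbf{a}^{(h)})=\sum_{k=1}^K p^{(h)}_{n,k}\pi^{(h)}_k(x^{(h)}_n;a^{(h)}_k)$ with mixing probabilities $\mathbf{p}_n^{(h)}\in\Delta^K$, completed by latent classes $C_n^{(h)}\in\{1,\dots,K\}$ and Dirichlet prior parameters $\mathbf{B}_n^{(h)}\in\mathbb{R}^K$, with completed log-posterior for layer $h$ $$\ell^{(h)}=\sum_{n=1}^N\ln\mathrm{Dir}(\mathbf{p}^{(h)}_n\mid\mathbf{B}^{(h)}_n)+\sum_{n=1}^N\sum_{k=1}^K\delta_k^{C^{(h)}_n}\big[\ln p^{(h)}_{n,k}+\ln\pi^{(h)}_k(x^{(h)}_n;a^{(h)}_k)\big],$$ where $\mathrm{Dir}(\mathbf{p}\mid\mathbf{b})=\frac{\Gamma(\sum_k b_k)}{\prod_k\Gamma(b_k)}\prod_k p_k^{b_k-1}$. For all $(n,k,h)$, let $f^{(h)}_{n,k}:\mathbb{R}^{NH}\to\mathbb{R}$ be any linear function such that $f^{(h)}_{n,k}([0,+\infty[^{NH})\subset\mathbb{R}_+$, and set $$\mathbf{B}^{(h)}_n=\Big(f^{(h)}_{n,1}\big(\delta_1^{C^{(1)}_\cdot},\dots,\delta_1^{C^{(H)}_\cdot}\big)-\delta_1^{C^{(h)}_n}+1,\ \dots,\ f^{(h)}_{n,K}\big(\delta_K^{C^{(1)}_\cdot},\dots,\delta_K^{C^{(H)}_\cdot}\big)-\delta_K^{C^{(h)}_n}+1\Big),$$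 where $\delta_k^{C^{(h)}_\cdot}=(\delta_k^{C^{(h)}_1},\dots,\delta_k^{C^{(h)}_N})$. Then, in the EM algorithm (E-step: conditional expectation of $\ell^{(h)}$ given all data $((x^{(h')}_n)_n)_{h'}$ and previous estimates $(\boldsymbol\theta^{(t,h')})_{h'}$; M-step: maximization subject to $\mathbf{p}^{(h)}_n\in\Delta^K$), the mixing probability updates of layer $h$ are, for all $(n,k,h)$, $$p^{(t+1,h)}_{n,k}=\frac{f^{(h)}_{n,k}(\tau^{(t,1)}_{\cdot,k},\dots,\tau^{(t,H)}_{\cdot,k})}{\sum_{k'=1}^K f^{(h)}_{n,k'}(\tau^{(t,1)}_{\cdot,k'},\dots,\tau^{(t,H)}_{\cdot,k'})},$$ where $\tau^{(t,h)}_{n,k}=P(C^{(h)}_n=k\mid x^{(h)}_n,\boldsymbol\theta^{(t,h)})$ is the posterior probability of component $k$ for sample $x^{(h)}_n$ at the previous E-step, $\boldsymbol\theta^{(t,h)}$ is the previous parameter estimate at layer $h$, and $\tau^{(t,h)}_{\cdot,k}=(\tau^{(t,h)}_{1,k},\dots,\tau^{(t,h)}_{N,k})$.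
   Context: $\Delta^K$ denotes the $K$-dimensional probability simplex; $\delta_i^j$ is the Kronecker symbol; $\boldsymbol\theta^{(h)}=((\mathbf{p}^{(h)}_n)_n,\mathbf{a}^{(h)})$ are the parameters of layer $h$. The classes of different layers are treated as conditionally independent given the data and previous parameters, with $\tau^{(t,h)}_{n,k}=p^{(t,h)}_{n,k}\pi^{(h)}_k(x^{(h)}_n;a^{(t,h)}_k)/\sum_j p^{(t,h)}_{n,j}\pi^{(h)}_j(x^{(h)}_n;a^{(t,h)}_j)$. *)

theory Defs
  imports "HOL-Analysis.Analysis"
begin

text \<open>Conventions. Layers h, samples n, components k are 0-based:
  h < H, n < N, k < K. A class configuration for all layers is
  c :: nat => nat => nat with c h n the class of sample n aprev layer h.\<close>

definition kron :: "nat \<Rightarrow> nat \<Rightarrow> real" where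
  "kron i j = (if i = j then 1 else 0)"

definition lnE :: "real \<Rightarrow> ereal" where
  "lnE x = (if x > 0 then ereal (ln x) else - \<infinity>)"

definition prob_simplex :: "nat \<Rightarrow> (nat \<Rightarrow> real) set" where
  "prob_simplex K = {q. (\<forall>k<K. 0 \<le> q k) \<and> (\<Sum>k<K. q k) = 1}"

text \<open>A linear map R^(N H) -> R, where vectors of R^(N H) are represented as
  v :: nat => nat => real with coordinates v h n (h < H, n < N); the map only
  depends on these coordinates and is additive and homogeneous.\<close>
definition linear_grid :: "nat \<Rightarrow> nat \<Rightarrow> ((nat \<Rightarrow> nat \<Rightarrow> real) \<Rightarrow> real) \<Rightarrow> bool" where
  "linear_grid H N g \<longleftrightarrow>
     (\<forall>u v. (\<forall>h<H. \<forall>n<N. u h n = v h n) \<longrightarrow> g u = g v) \<and>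
     (\<forall>u v. g (\<lambda>h n. u h n + v h n) = g u + g v) \<and>
     (\<forall>c u. g (\<lambda>h n. c * u h n) = c * g u)"

definition nonneg_grid :: "nat \<Rightarrow> nat \<Rightarrow> ((nat \<Rightarrow> nat \<Rightarrow> real) \<Rightarrow> real) \<Rightarrow> bool" where
  "nonneg_grid H N g \<longleftrightarrow> (\<forall>u. (\<forall>h<H. \<forall>n<N. 0 \<le> u h n) \<longrightarrow> 0 \<le> g u)"

definition dir_norm :: "nat \<Rightarrow> (nat \<Rightarrow> real) \<Rightarrow> real" where
  "dir_norm K b = Gamma (\<Sum>k<K. b k) / (\<Prod>k<K. Gamma (b k))"

text \<open>Posterior class probabilities tau^(t,h)_(n,k) from the previous parameters
  pprev h n k = p^(t,h)_(n,k), aprev h k = a^(t,h)_k; dens h k x a = pi^(h)_k(x; a),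
  data x h n = x^(h)_n.\<close>
definition tau :: "nat \<Rightarrow> (nat \<Rightarrow> nat \<Rightarrow> 'x \<Rightarrow> 'a \<Rightarrow> real) \<Rightarrow> (nat \<Rightarrow> nat \<Rightarrow> 'x)
    \<Rightarrow> (nat \<Rightarrow> nat \<Rightarrow> nat \<Rightarrow> real) \<Rightarrow> (nat \<Rightarrow> nat \<Rightarrow> 'a) \<Rightarrow> nat \<Rightarrow> nat \<Rightarrow> nat \<Rightarrow> real" where
  "tau K dens x pprev aprev h n k =
     pprev h n k * dens h k (x h n) (aprev h k) / (\<Sum>j<K. pprev h n j * dens h j (x h n) (aprev h j))"

definition configs :: "nat \<Rightarrow> nat \<Rightarrow> nat \<Rightarrow> (nat \<Rightarrow> nat \<Rightarrow> nat) set" where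
  "configs H N K = (\<Pi>\<^sub>E h\<in>{..<H}. \<Pi>\<^sub>E n\<in>{..<N}. {..<K})"

text \<open>Conditional probability of a configuration given all data and the previous
  estimates: samples independent within a layer, layers conditionally independent.\<close>
definition config_prob :: "nat \<Rightarrow> nat \<Rightarrow> (nat \<Rightarrow> nat \<Rightarrow> nat \<Rightarrow> real)
    \<Rightarrow> (nat \<Rightarrow> nat \<Rightarrow> nat) \<Rightarrow> real" where
  "config_prob H N tt c = (\<Prod>h<H. \<Prod>n<N. tt h n (c h n))"

definition Bpar :: "(nat \<Rightarrow> nat \<Rightarrow> nat \<Rightarrow> (nat \<Rightarrow> nat \<Rightarrow> real) \<Rightarrow> real)
    \<Rightarrow> (nat \<Rightarrow> nat \<Rightarrow> nat) \<Rightarrow> nat \<Rightarrow> nat \<Rightarrow> nat \<Rightarrow> real" where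
  "Bpar f c h n k = f h n k (\<lambda>h' n'. kron k (c h' n')) - kron k (c h n) + 1"

text \<open>Completed log-posterior ell^(h) for layer h, mixing probabilities p n k,
  component parameters a k, configuration c:
   sum_n ln Dir(p_n | B_n) + sum_n sum_k delta [ln p_(n,k) + ln pi_k(x_n; a_k)],
  where ln Dir(p|b) = ln(normaliser) + sum_k (b_k - 1) ln p_k; the two terms in
  ln p_(n,k) (from the Dirichlet kernel and from the class indicator) are
  collected into one coefficient so that the extended-real sum is well defined.\<close>
definition loglik :: "nat \<Rightarrow> nat \<Rightarrow> (nat \<Rightarrow> nat \<Rightarrow> nat \<Rightarrow> (nat \<Rightarrow> nat \<Rightarrow> real) \<Rightarrow> real)
    \<Rightarrow> (nat \<Rightarrow> nat \<Rightarrow> 'x \<Rightarrow> 'a \<Rightarrow> real) \<Rightarrow> (nat \<Rightarrow> nat \<Rightarrow> 'x) \<Rightarrow> nat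
    \<Rightarrow> (nat \<Rightarrow> nat \<Rightarrow> real) \<Rightarrow> (nat \<Rightarrow> 'a) \<Rightarrow> (nat \<Rightarrow> nat \<Rightarrow> nat) \<Rightarrow> ereal" where
  "loglik N K f dens x h p a c =
     (\<Sum>n<N. ereal (ln (dir_norm K (Bpar f c h n)))
        + (\<Sum>k<K. ereal ((Bpar f c h n k - 1) + kron k (c h n)) * lnE (p n k)))
     + (\<Sum>n<N. \<Sum>k<K. ereal (kron k (c h n)) * lnE (dens h k (x h n) (a k)))"

definition Qfun :: "nat \<Rightarrow> nat \<Rightarrow> nat \<Rightarrow> (nat \<Rightarrow> nat \<Rightarrow> nat \<Rightarrow> (nat \<Rightarrow> nat \<Rightarrow> real) \<Rightarrow> real)
    \<Rightarrow> (nat \<Rightarrow> nat \<Rightarrow> 'x \<Rightarrow> 'a \<Rightarrow> real) \<Rightarrow> (nat \<Rightarrow> nat \<Rightarrow> 'x)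
    \<Rightarrow> (nat \<Rightarrow> nat \<Rightarrow> nat \<Rightarrow> real) \<Rightarrow> (nat \<Rightarrow> nat \<Rightarrow> 'a) \<Rightarrow> nat
    \<Rightarrow> (nat \<Rightarrow> nat \<Rightarrow> real) \<Rightarrow> (nat \<Rightarrow> 'a) \<Rightarrow> ereal" where
  "Qfun H N K f dens x pprev aprev h p a =
     (\<Sum>c\<in>configs H N K. ereal (config_prob H N (tau K dens x pprev aprev) c) * loglik N K f dens x h p a c)"

end

theory Submission
  imports Defs
begin

text \<open>The completed log-posterior is affine in the class indicators: the Dirichlet exponent
  B - 1 together with the class indicator gives ln p_(n,k) the coefficient f_(n,k)(delta_k).
  As f_(n,k) is linear and, under the product posterior, each indicator of C_n^(h) = k has
  expectation tau_(n,k)^(h), the E-step yields a constant independent of p plus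
  sum_n sum_k f_(n,k)(tau_k) ln p_(n,k). Each row is maximised over the simplex by Gibbs'
  inequality: F ln q \<le> F ln (F/S) + S q - F (the tangent of ln at F/S), which sums to the
  claimed bound because the q_k sum to 1, with equality only at q = F/S.\<close>

lemma ereal_sum_le_sum:
  fixes t :: "'i \<Rightarrow> ereal"
  assumes "\<And>i. i \<in> I \<Longrightarrow> t i \<le> ereal (b i)"
  shows "sum t I \<le> ereal (sum b I)"
  using sum_mono[of I t "\<lambda>i. ereal (b i)"] assms by simp

lemma ereal_sum_eq_sum_imp_eq:
  fixes t :: "'i \<Rightarrow> ereal"
  assumes fin: "finite I" and le: "\<And>i. i \<in> I \<Longrightarrow> t i \<le> ereal (b i)"
    and eq: "sum t I = ereal (sum b I)" and j: "j \<in> I"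
  shows "t j = ereal (b j)"
proof (rule ccontr)
  assume "t j \<noteq> ereal (b j)"
  with le[OF j] obtain b' where b': "t j \<le> ereal b'" "b' < b j"
    by (cases "t j") (auto intro: that[of "b j - 1"] that[of "real_of_ereal (t j)"])
  have "sum t I \<le> ereal (sum (b(j := b')) I)"
    by (rule ereal_sum_le_sum) (use le b' in auto)
  also have "sum (b(j := b')) I < sum b I"
    by (rule sum_strict_mono_ex1) (use fin j b' in auto)
  finally show False using eq by simp
qed

lemma weighted_ln_le_tangent:
  fixes F S q :: real
  assumes F: "0 < F" and S: "0 < S" and q: "0 < q"
  shows "F * ln q \<le> F * ln (F / S) + S * q - F"
    and "q \<noteq> F / S \<Longrightarrow> F * ln q < F * ln (F / S) + S * q - F"
proof -
  have p: "0 < F / S" using F S by simp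
  have rhs: "F * ln (F / S) + S * q - F = F * ln (F / S) + F * ((q - F / S) / (F / S))"
    using F S by (simp add: field_simps)
  show "F * ln q \<le> F * ln (F / S) + S * q - F"
    using mult_left_mono[OF ln_diff_le[OF q p], of F] F unfolding rhs by (simp add: algebra_simps)
  show "F * ln q < F * ln (F / S) + S * q - F" if "q \<noteq> F / S"
    using mult_strict_left_mono[OF ln_diff_less[OF q p that] F] unfolding rhs by (simp add: algebra_simps)
qed

text \<open>The term S q keeps the equality case sharp for F = 0, where 0 * lnE q = 0 in ereal.\<close>

lemma weighted_lnE_le_tangent:
  fixes F S q :: real
  assumes F: "0 \<le> F" and S: "0 < S" and q: "0 \<le> q"
  shows "ereal F * lnE q \<le> ereal (F * ln (F / S) + S * q - F)"
    and "ereal F * lnE q = ereal (F * ln (F / S) + S * q - F) \<longleftrightarrow> q = F / S"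
proof -
  consider "F = 0" | "0 < F" "q = 0" | "0 < F" "0 < q" using F q by linarith
  then have "ereal F * lnE q \<le> ereal (F * ln (F / S) + S * q - F) \<and>
    (ereal F * lnE q = ereal (F * ln (F / S) + S * q - F) \<longleftrightarrow> q = F / S)"
  proof cases
    case 1
    then show ?thesis using S q by (simp add: zero_ereal_def[symmetric])
  next
    case 2
    then show ?thesis using S by (simp add: lnE_def)
  next
    case 3
    then show ?thesis using weighted_ln_le_tangent[OF _ S] by (force simp: lnE_def)
  qed
  then show "ereal F * lnE q \<le> ereal (F * ln (F / S) + S * q - F)"
    and "ereal F * lnE q = ereal (F * ln (F / S) + S * q - F) \<longleftrightarrow> q = F / S"
    by blast+
qed

lemma normalized_in_prob_simplex:
  fixes F :: "nat \<Rightarrow> real"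
  assumes "\<forall>k<K. 0 \<le> F k" and "0 < (\<Sum>k<K. F k)"
  shows "(\<lambda>k. F k / (\<Sum>j<K. F j)) \<in> prob_simplex K"
  using assms by (simp add: prob_simplex_def sum_divide_distrib[symmetric])

lemma gibbs_inequality:
  fixes F q :: "nat \<Rightarrow> real"
  assumes F: "\<forall>k<K. 0 \<le> F k" and S: "0 < (\<Sum>k<K. F k)" and q: "q \<in> prob_simplex K"
  defines "r \<equiv> \<Sum>k<K. F k * ln (F k / (\<Sum>j<K. F j))"
  shows "(\<Sum>k<K. ereal (F k) * lnE (q k)) \<le> ereal r"
    and "(\<Sum>k<K. ereal (F k) * lnE (q k)) = ereal r \<longleftrightarrow> (\<forall>k<K. q k = F k / (\<Sum>j<K. F j))"
proof -
  define S where "S = (\<Sum>k<K. F k)"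
  define b where "b k = F k * ln (F k / S) + S * q k - F k" for k
  have q_nonneg: "\<forall>k<K. 0 \<le> q k" and q_sum: "(\<Sum>k<K. q k) = 1"
    using q by (auto simp: prob_simplex_def)
  have "(\<Sum>k<K. b k) = r + S * (\<Sum>k<K. q k) - S"
    by (simp add: b_def r_def S_def sum.distrib sum_subtractf sum_distrib_left)
  then have sum_b: "(\<Sum>k<K. b k) = r"
    using q_sum by simp
  have term_le: "ereal (F k) * lnE (q k) \<le> ereal (b k)"
    and term_eq: "ereal (F k) * lnE (q k) = ereal (b k) \<longleftrightarrow> q k = F k / S" if "k < K" for k
    using weighted_lnE_le_tangent[of "F k" S "q k"] F q_nonneg S that by (simp_all add: b_def S_def)
  show "(\<Sum>k<K. ereal (F k) * lnE (q k)) \<le> ereal r"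
    using ereal_sum_le_sum[of "{..<K}"] term_le sum_b by fastforce
  show "(\<Sum>k<K. ereal (F k) * lnE (q k)) = ereal r \<longleftrightarrow> (\<forall>k<K. q k = F k / (\<Sum>j<K. F j))"
  proof
    assume "(\<Sum>k<K. ereal (F k) * lnE (q k)) = ereal r"
    then have "ereal (F k) * lnE (q k) = ereal (b k)" if "k < K" for k
      using ereal_sum_eq_sum_imp_eq[of "{..<K}" "\<lambda>k. ereal (F k) * lnE (q k)" b k] term_le sum_b that by simp
    then show "\<forall>k<K. q k = F k / (\<Sum>j<K. F j)"
      using term_eq by (simp add: S_def)
  next
    assume "\<forall>k<K. q k = F k / (\<Sum>j<K. F j)"
    then show "(\<Sum>k<K. ereal (F k) * lnE (q k)) = ereal r"
      using term_eq sum_b by (simp add: S_def)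
  qed
qed

lemma const_plus_weighted_lnE_argmax:
  fixes A :: ereal and F q :: "nat \<Rightarrow> nat \<Rightarrow> real"
  assumes A: "A \<noteq> \<infinity>" and F: "\<forall>n<N. \<forall>k<K. 0 \<le> F n k"
    and S: "\<forall>n<N. 0 < (\<Sum>k<K. F n k)" and q: "\<forall>n<N. q n \<in> prob_simplex K"
  defines "p \<equiv> \<lambda>n k. F n k / (\<Sum>j<K. F n j)"
  shows "A + (\<Sum>n<N. \<Sum>k<K. ereal (F n k) * lnE (q n k))
           \<le> A + (\<Sum>n<N. \<Sum>k<K. ereal (F n k) * lnE (p n k))"
    and "A + (\<Sum>n<N. \<Sum>k<K. ereal (F n k) * lnE (p n k)) \<noteq> - \<infinity> \<Longrightarrow>
         A + (\<Sum>n<N. \<Sum>k<K. ereal (F n k) * lnE (q n k))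
           = A + (\<Sum>n<N. \<Sum>k<K. ereal (F n k) * lnE (p n k)) \<Longrightarrow>
         \<forall>n<N. \<forall>k<K. q n k = p n k"
proof -
  define r where "r n = (\<Sum>k<K. F n k * ln (F n k / (\<Sum>j<K. F n j)))" for n
  have p_simplex: "p n \<in> prob_simplex K" if "n < N" for n
    using normalized_in_prob_simplex[of K "F n"] F S that by (simp add: p_def)
  have row_le: "(\<Sum>k<K. ereal (F n k) * lnE (q n k)) \<le> ereal (r n)" if "n < N" for n
    using gibbs_inequality(1)[of K "F n" "q n"] F S q that by (simp add: r_def)
  have row_max: "(\<Sum>k<K. ereal (F n k) * lnE (p n k)) = ereal (r n)" if "n < N" for n
    using gibbs_inequality(2)[of K "F n" "p n"] F S p_simplex that by (simp add: p_def r_def)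
  then have max: "(\<Sum>n<N. \<Sum>k<K. ereal (F n k) * lnE (p n k)) = ereal (\<Sum>n<N. r n)"
    by simp
  show "A + (\<Sum>n<N. \<Sum>k<K. ereal (F n k) * lnE (q n k))
          \<le> A + (\<Sum>n<N. \<Sum>k<K. ereal (F n k) * lnE (p n k))"
    unfolding max by (intro add_left_mono ereal_sum_le_sum) (simp add: row_le)
  assume finite: "A + (\<Sum>n<N. \<Sum>k<K. ereal (F n k) * lnE (p n k)) \<noteq> - \<infinity>"
    and eq: "A + (\<Sum>n<N. \<Sum>k<K. ereal (F n k) * lnE (q n k))
           = A + (\<Sum>n<N. \<Sum>k<K. ereal (F n k) * lnE (p n k))"
  have "A \<noteq> - \<infinity>"
    using finite unfolding max by auto
  then have "(\<Sum>n<N. \<Sum>k<K. ereal (F n k) * lnE (q n k)) = ereal (\<Sum>n<N. r n)"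
    using eq A ereal_add_cancel_left unfolding max by blast
  then have "(\<Sum>k<K. ereal (F n k) * lnE (q n k)) = ereal (r n)" if "n < N" for n
    using ereal_sum_eq_sum_imp_eq[of "{..<N}" "\<lambda>n. \<Sum>k<K. ereal (F n k) * lnE (q n k)" r n]
      row_le that by simp
  then show "\<forall>n<N. \<forall>k<K. q n k = p n k"
    using gibbs_inequality(2)[of K "F n" "q n" for n] F S q by (simp add: p_def r_def)
qed

lemma linear_grid_sum:
  assumes g: "linear_grid H N g" and C: "finite C"
  shows "g (\<lambda>h n. \<Sum>c\<in>C. w c * u c h n) = (\<Sum>c\<in>C. w c * g (u c))"
  using C
proof (induction C rule: finite_induct)
  case empty
  have "g (\<lambda>h n. 0 * v h n) = 0 * g v" for v
    using g unfolding linear_grid_def by blast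
  then show ?case by simp
next
  case (insert c C)
  have add: "g (\<lambda>h n. u h n + v h n) = g u + g v"
    and hom: "g (\<lambda>h n. r * u h n) = r * g u" for u v r
    using g unfolding linear_grid_def by blast+
  show ?case
    using insert add[of "\<lambda>h n. w c * u c h n"] hom[of "w c" "u c"] by simp
qed

lemma sum_PiE_prod_times_marginal:
  fixes w :: "'i \<Rightarrow> 'a \<Rightarrow> 'c::comm_semiring_1"
  assumes I: "finite I" and A: "finite A" and i0: "i0 \<in> I"
    and normalised: "\<And>i. i \<in> I \<Longrightarrow> i \<noteq> i0 \<Longrightarrow> sum (w i) A = 1"
  shows "(\<Sum>c\<in>PiE I (\<lambda>_. A). (\<Prod>i\<in>I. w i (c i)) * g (c i0)) = (\<Sum>a\<in>A. w i0 a * g a)"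
proof -
  define w' where "w' i a = (if i = i0 then w i a * g a else w i a)" for i a
  have "(\<Prod>i\<in>I. w i (c i)) * g (c i0) = (\<Prod>i\<in>I. w' i (c i))" for c
    using prod.remove[OF I i0, of "\<lambda>i. w i (c i)"] prod.remove[OF I i0, of "\<lambda>i. w' i (c i)"]
    by (simp add: w'_def mult_ac)
  then have "(\<Sum>c\<in>PiE I (\<lambda>_. A). (\<Prod>i\<in>I. w i (c i)) * g (c i0)) = (\<Prod>i\<in>I. sum (w' i) A)"
    using prod_sum_PiE[OF I A, of w'] by simp
  also have "\<dots> = sum (w' i0) A * (\<Prod>i\<in>I - {i0}. sum (w' i) A)"
    using prod.remove[OF I i0] .
  also have "\<dots> = (\<Sum>a\<in>A. w i0 a * g a)"
    using normalised by (simp add: w'_def)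
  finally show ?thesis .
qed

lemma finite_configs: "finite (configs H N K)"
  by (simp add: configs_def finite_PiE)

lemma config_prob_marginal:
  assumes normalised: "\<And>h n. h < H \<Longrightarrow> n < N \<Longrightarrow> (\<Sum>j<K. tt h n j) = 1"
    and h0: "h0 < H" and n0: "n0 < N"
  shows "(\<Sum>c\<in>configs H N K. config_prob H N tt c * g (c h0 n0)) = (\<Sum>j<K. tt h0 n0 j * g j)"
proof -
  have layer: "(\<Sum>r\<in>PiE {..<N} (\<lambda>_. {..<K}). (\<Prod>n<N. tt h n (r n)) * G (r n0))
      = (\<Sum>j<K. tt h n0 j * G j)" if "h < H" for h and G :: "nat \<Rightarrow> real"
    by (rule sum_PiE_prod_times_marginal) (use normalised that n0 in auto)
  have "(\<Sum>c\<in>configs H N K. config_prob H N tt c * g (c h0 n0))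
      = (\<Sum>r\<in>PiE {..<N} (\<lambda>_. {..<K}). (\<Prod>n<N. tt h0 n (r n)) * g (r n0))"
    unfolding configs_def config_prob_def
    by (rule sum_PiE_prod_times_marginal[where w = "\<lambda>h r. \<Prod>n<N. tt h n (r n)"])
      (use layer[where G = "\<lambda>_. 1"] normalised n0 h0 in \<open>auto simp: finite_PiE\<close>)
  also have "\<dots> = (\<Sum>j<K. tt h0 n0 j * g j)"
    using layer[OF h0] .
  finally show ?thesis .
qed

lemma expected_linear_grid_indicator:
  assumes g: "linear_grid H N g"
    and normalised: "\<And>h n. h < H \<Longrightarrow> n < N \<Longrightarrow> (\<Sum>j<K. tt h n j) = 1" and k: "k < K"
  shows "(\<Sum>c\<in>configs H N K. config_prob H N tt c * g (\<lambda>h n. kron k (c h n))) = g (\<lambda>h n. tt h n k)"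
proof -
  have "(\<Sum>c\<in>configs H N K. config_prob H N tt c * g (\<lambda>h n. kron k (c h n)))
      = g (\<lambda>h n. \<Sum>c\<in>configs H N K. config_prob H N tt c * kron k (c h n))"
    using linear_grid_sum[OF g finite_configs] by simp
  also have "\<dots> = g (\<lambda>h n. tt h n k)"
  proof -
    have "(\<Sum>c\<in>configs H N K. config_prob H N tt c * kron k (c h n)) = tt h n k"
      if "h < H" "n < N" for h n
      using config_prob_marginal[OF normalised that, where g = "kron k"] k
      by (simp add: kron_def if_distrib sum.delta' cong: if_cong)
    then show ?thesis
      using g unfolding linear_grid_def by presburger
  qed
  finally show ?thesis .
qed

lemma tau_in_prob_simplex:
  assumes "pprev h n \<in> prob_simplex K" and "\<forall>k<K. 0 \<le> dens h k (x h n) (aprev h k)"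
    and "0 < (\<Sum>j<K. pprev h n j * dens h j (x h n) (aprev h j))"
  shows "tau K dens x pprev aprev h n \<in> prob_simplex K"
  using normalized_in_prob_simplex[of K "\<lambda>k. pprev h n k * dens h k (x h n) (aprev h k)"] assms
  unfolding tau_def prob_simplex_def by (simp add: fun_eq_iff)

lemma config_prob_nonneg:
  assumes "\<forall>h<H. \<forall>n<N. \<forall>k<K. 0 \<le> tt h n k" and "c \<in> configs H N K"
  shows "0 \<le> config_prob H N tt c"
  using assms unfolding config_prob_def configs_def by (auto simp: PiE_iff intro!: prod_nonneg)

lemma Qfun_eq_const_plus_weighted_lnE:
  fixes H N K :: nat and dens :: "nat \<Rightarrow> nat \<Rightarrow> 'x \<Rightarrow> 'a \<Rightarrow> real" and x :: "nat \<Rightarrow> nat \<Rightarrow> 'x"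
    and pprev :: "nat \<Rightarrow> nat \<Rightarrow> nat \<Rightarrow> real" and aprev :: "nat \<Rightarrow> nat \<Rightarrow> 'a" and a :: "nat \<Rightarrow> 'a"
  defines "w \<equiv> config_prob H N (tau K dens x pprev aprev)"
  assumes w_nonneg: "\<And>c. c \<in> configs H N K \<Longrightarrow> 0 \<le> w c"
    and f_nonneg: "\<And>n k. n < N \<Longrightarrow> k < K \<Longrightarrow> nonneg_grid H N (f h n k)"
  obtains A where "A \<noteq> \<infinity>"
    and "\<And>p. Qfun H N K f dens x pprev aprev h p a = A + (\<Sum>n<N. \<Sum>k<K.
           ereal (\<Sum>c\<in>configs H N K. w c * f h n k (\<lambda>h' n'. kron k (c h' n'))) * lnE (p n k))"
proof
  define \<alpha> where "\<alpha> c n k = f h n k (\<lambda>h' n'. kron k (c h' n'))" for c n k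
  define D where "D c = (\<Sum>n<N. ln (dir_norm K (Bpar f c h n)))" for c
  define E where "E c = (\<Sum>n<N. \<Sum>k<K. ereal (kron k (c h n)) * lnE (dens h k (x h n) (a k)))" for c
  define A where "A = (\<Sum>c\<in>configs H N K. ereal (w c) * (ereal (D c) + E c))"
  have \<alpha>_nonneg: "0 \<le> \<alpha> c n k" if "n < N" "k < K" for c n k
    using f_nonneg[OF that] unfolding nonneg_grid_def \<alpha>_def kron_def by simp
  have E_not_inf: "E c \<noteq> \<infinity>" for c
    unfolding E_def by (auto simp: sum_Pinfty kron_def lnE_def)
  have "ereal (w c) * (ereal (D c) + E c) \<noteq> \<infinity>" if "c \<in> configs H N K" for c
    using w_nonneg[OF that] E_not_inf[of c] by (cases "E c") auto
  then show "A \<noteq> \<infinity>"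
    unfolding A_def by (simp add: sum_Pinfty finite_configs)
  have ereal_nonneg_distrib: "ereal r * (u + v) = ereal r * u + ereal r * v" if "0 \<le> r" for r u v
    using distrib_left_ereal_nn[OF that, of u v] by (simp add: mult.commute)
  have ereal_nonneg_sum_distrib: "ereal r * sum u S = (\<Sum>i\<in>S. ereal r * u i)"
    if "0 \<le> r" for r and u :: "nat \<Rightarrow> ereal" and S
    using sum_distrib_right_ereal[OF that, of u S] by (simp add: mult.commute)
  fix p :: "nat \<Rightarrow> nat \<Rightarrow> real"
  have loglik: "loglik N K f dens x h p a c
      = (ereal (D c) + E c) + (\<Sum>n<N. \<Sum>k<K. ereal (\<alpha> c n k) * lnE (p n k))" for c
    by (simp add: loglik_def D_def E_def \<alpha>_def Bpar_def sum.distrib add_ac)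
  have "Qfun H N K f dens x pprev aprev h p a
      = A + (\<Sum>c\<in>configs H N K. \<Sum>n<N. \<Sum>k<K. ereal (w c * \<alpha> c n k) * lnE (p n k))"
    unfolding Qfun_def A_def loglik w_def[symmetric]
    using w_nonneg by (simp add: ereal_nonneg_distrib ereal_nonneg_sum_distrib sum.distrib mult.assoc[symmetric])
  also have "(\<Sum>c\<in>configs H N K. \<Sum>n<N. \<Sum>k<K. ereal (w c * \<alpha> c n k) * lnE (p n k))
      = (\<Sum>n<N. \<Sum>k<K. ereal (\<Sum>c\<in>configs H N K. w c * \<alpha> c n k) * lnE (p n k))"
    using w_nonneg \<alpha>_nonneg
    by (subst sum.swap, subst sum.swap) (simp add: sum_ereal_left_distrib[symmetric])
  finally show "Qfun H N K f dens x pprev aprev h p a = A + (\<Sum>n<N. \<Sum>k<K.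
      ereal (\<Sum>c\<in>configs H N K. w c * f h n k (\<lambda>h' n'. kron k (c h' n'))) * lnE (p n k))"
    by (simp add: \<alpha>_def)
qed

lemma Qfun_eq_const_plus_expected_weighted_lnE:
  fixes H N K :: nat and dens :: "nat \<Rightarrow> nat \<Rightarrow> 'x \<Rightarrow> 'a \<Rightarrow> real" and x :: "nat \<Rightarrow> nat \<Rightarrow> 'x"
    and pprev :: "nat \<Rightarrow> nat \<Rightarrow> nat \<Rightarrow> real" and aprev :: "nat \<Rightarrow> nat \<Rightarrow> 'a" and a :: "nat \<Rightarrow> 'a"
  defines "\<tau> \<equiv> tau K dens x pprev aprev"
  assumes f_lin: "\<And>n k. n < N \<Longrightarrow> k < K \<Longrightarrow> linear_grid H N (f h n k)"
    and f_nonneg: "\<And>n k. n < N \<Longrightarrow> k < K \<Longrightarrow> nonneg_grid H N (f h n k)"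
    and tau_simplex: "\<forall>h'<H. \<forall>n<N. \<tau> h' n \<in> prob_simplex K"
  obtains A where "A \<noteq> \<infinity>"
    and "\<And>p. Qfun H N K f dens x pprev aprev h p a
           = A + (\<Sum>n<N. \<Sum>k<K. ereal (f h n k (\<lambda>h' n'. \<tau> h' n' k)) * lnE (p n k))"
proof -
  obtain A where A: "A \<noteq> \<infinity>" and Q: "\<And>p. Qfun H N K f dens x pprev aprev h p a = A + (\<Sum>n<N. \<Sum>k<K.
      ereal (\<Sum>c\<in>configs H N K. config_prob H N \<tau> c * f h n k (\<lambda>h' n'. kron k (c h' n'))) * lnE (p n k))"
  proof (rule Qfun_eq_const_plus_weighted_lnE[of H N K dens x pprev aprev f h a, folded \<tau>_def])
    show "0 \<le> config_prob H N \<tau> c" if "c \<in> configs H N K" for c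
      using config_prob_nonneg[OF _ that] tau_simplex unfolding prob_simplex_def by blast
  qed (use f_nonneg in auto)
  have "(\<Sum>c\<in>configs H N K. config_prob H N \<tau> c * f h n k (\<lambda>h' n'. kron k (c h' n')))
      = f h n k (\<lambda>h' n'. \<tau> h' n' k)" if "n < N" "k < K" for n k
    using expected_linear_grid_indicator[OF f_lin[OF that]] tau_simplex that
    by (simp add: prob_simplex_def)
  then show ?thesis
    using that[OF A] unfolding Q by (simp cong: sum.cong_simp)
qed

theorem proposition3:
  fixes H N K :: nat
    and f :: "nat \<Rightarrow> nat \<Rightarrow> nat \<Rightarrow> (nat \<Rightarrow> nat \<Rightarrow> real) \<Rightarrow> real"
    and dens :: "nat \<Rightarrow> nat \<Rightarrow> 'x \<Rightarrow> 'a \<Rightarrow> real"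
    and x :: "nat \<Rightarrow> nat \<Rightarrow> 'x"
    and pprev :: "nat \<Rightarrow> nat \<Rightarrow> nat \<Rightarrow> real"
    and aprev :: "nat \<Rightarrow> nat \<Rightarrow> 'a"
    and h :: nat
  assumes f_lin: "\<And>h n k. h < H \<Longrightarrow> n < N \<Longrightarrow> k < K \<Longrightarrow> linear_grid H N (f h n k)"
    and f_nonneg: "\<And>h n k. h < H \<Longrightarrow> n < N \<Longrightarrow> k < K \<Longrightarrow> nonneg_grid H N (f h n k)"
    and pi_nonneg: "\<And>h k y b. h < H \<Longrightarrow> k < K \<Longrightarrow> 0 \<le> dens h k y b"
    and pt_simplex: "\<And>h n. h < H \<Longrightarrow> n < N \<Longrightarrow> pprev h n \<in> prob_simplex K"
    and evidence_pos: "\<And>h n. h < H \<Longrightarrow> n < N \<Longrightarrow>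
           0 < (\<Sum>j<K. pprev h n j * dens h j (x h n) (aprev h j))"
    and denom_pos: "\<And>n. n < N \<Longrightarrow>
           0 < (\<Sum>k'<K. f h n k' (\<lambda>h' n'. tau K dens x pprev aprev h' n' k'))"
    and h: "h < H"
  defines "pnew \<equiv> \<lambda>n k. f h n k (\<lambda>h' n'. tau K dens x pprev aprev h' n' k)
              / (\<Sum>k'<K. f h n k' (\<lambda>h' n'. tau K dens x pprev aprev h' n' k'))"
  shows "(\<forall>n<N. pnew n \<in> prob_simplex K)
     \<and> (\<forall>a q. (\<forall>n<N. q n \<in> prob_simplex K) \<longrightarrow>
            Qfun H N K f dens x pprev aprev h q a \<le> Qfun H N K f dens x pprev aprev h pnew a)
     \<and> (\<forall>a q. (\<forall>n<N. q n \<in> prob_simplex K) \<longrightarrow> Qfun H N K f dens x pprev aprev h pnew a \<noteq> - \<infinity> \<longrightarrow>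
            Qfun H N K f dens x pprev aprev h q a = Qfun H N K f dens x pprev aprev h pnew a \<longrightarrow>
            (\<forall>n<N. \<forall>k<K. q n k = pnew n k))"
proof -
  let ?tau = "tau K dens x pprev aprev"
  define F where "F n k = f h n k (\<lambda>h' n'. ?tau h' n' k)" for n k
  have "?tau h' n \<in> prob_simplex K" if "h' < H" "n < N" for h' n
    by (rule tau_in_prob_simplex) (use pt_simplex pi_nonneg evidence_pos that in auto)
  then have tau_simplex: "\<forall>h'<H. \<forall>n<N. ?tau h' n \<in> prob_simplex K"
    by blast
  have F_nonneg: "\<forall>n<N. \<forall>k<K. 0 \<le> F n k"
    using f_nonneg[OF h] tau_simplex unfolding F_def nonneg_grid_def prob_simplex_def by simp
  have F_sum_pos: "\<forall>n<N. 0 < (\<Sum>k<K. F n k)"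
    using denom_pos by (simp add: F_def)
  have pnew_F: "pnew = (\<lambda>n k. F n k / (\<Sum>j<K. F n j))"
    by (simp add: pnew_def F_def)
  have "Qfun H N K f dens x pprev aprev h q a \<le> Qfun H N K f dens x pprev aprev h pnew a
    \<and> (Qfun H N K f dens x pprev aprev h pnew a \<noteq> - \<infinity> \<longrightarrow>
        Qfun H N K f dens x pprev aprev h q a = Qfun H N K f dens x pprev aprev h pnew a \<longrightarrow>
        (\<forall>n<N. \<forall>k<K. q n k = pnew n k))"
    if q: "\<forall>n<N. q n \<in> prob_simplex K" for a q
  proof -
    obtain A where "A \<noteq> \<infinity>"
      and "\<And>p. Qfun H N K f dens x pprev aprev h p a = A + (\<Sum>n<N. \<Sum>k<K. ereal (F n k) * lnE (p n k))"
      unfolding F_def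
      by (rule Qfun_eq_const_plus_expected_weighted_lnE[where f = f and h = h])
        (use f_lin f_nonneg h tau_simplex in auto)
    then show ?thesis
      using const_plus_weighted_lnE_argmax[OF _ F_nonneg F_sum_pos q] unfolding pnew_F by simp
  qed
  then show ?thesis
    using normalized_in_prob_simplex F_nonneg F_sum_pos unfolding pnew_F by blast
qed

end
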